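(* For $n\ge 0$ and $q\ge1$, let $\psi:\mathcal{B}_n\to\mathcal{B}_{n+q+1}$ be defined by $\psi(v01^k)=v001^{k+q}$ for any binary word $v$ and $k\ge0$, and $\psi(1^n)=1^{n+q+1}$. Then $\psi(\mathcal{W}^q_n)$ is exactly the set of $q$-decreasing words of length $n+q+1$ ending with at least $q$ letters $1$.
   Context: $\mathcal{B}_n$ is the set of binary words of length $n$. For $q\ge1$, a binary word is $q$-decreasing if for every maximal run of $0$s, of length $a>0$, together with the (possibly empty) maximal run of $1$s immediately following it, of length $b$, one has $q\cdot a>b$; $\mathcal{W}^q_n$ is the set of $q$-decreasing words of length $n$. *)

theory Defs
  imports Main
begin

text \<open>Binary words are lists of booleans: False encodes the letter 0, True the letter 1.\<close>

definition binwords :: "nat \<Rightarrow> bool list set" where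
  "binwords n = {w. length w = n}"

text \<open>A word is q-decreasing if every maximal run of 0s (length a > 0) followed by the
maximal (possibly empty) run of 1s immediately after it (length b) satisfies q*a > b.\<close>
definition q_decreasing :: "nat \<Rightarrow> bool list \<Rightarrow> bool" where
  "q_decreasing q w \<longleftrightarrow>
     (\<forall>u a b v. w = u @ replicate a False @ replicate b True @ v \<and> 0 < a
        \<and> (u = [] \<or> last u = True) \<and> (v = [] \<or> hd v = False) \<longrightarrow> b < q * a)"

definition qdec_words :: "nat \<Rightarrow> nat \<Rightarrow> bool list set" where
  "qdec_words q n = {w \<in> binwords n. q_decreasing q w}"

definition psi :: "nat \<Rightarrow> bool list \<Rightarrow> bool list" where
  "psi q w = (if \<forall>x\<in>set w. x then replicate (length w + q + 1) True
     else (let k = length (takeWhile (\<lambda>x. x) (rev w));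
               v = take (length w - k - 1) w
           in v @ [False, False] @ replicate (k + q) True))"

end

theory Submission
  imports Defs
begin

text \<open>Every word containing a 0 factors as x 0^a 1^k with x empty or ending in 1, and
q-decreasingness splits along such 1|0 boundaries: the word is q-decreasing iff x is and k < q a.
Since psi sends x 0^a 1^k to x 0^(a+1) 1^(k+q), and k < q a iff k + q < q (a + 1), psi preserves
q-decreasingness; conversely a q-decreasing word x 0^a 1^m ending in 1^q has m \<ge> q and hence
a \<ge> 2, so it is the image of x 0^(a-1) 1^(m-q). The key combinatorial fact is that 0^a 1^b is
sorted, so a maximal 0-run/1-run block can never straddle a 1|0 boundary.\<close>

lemma sorted_False_True: "sorted (replicate a False @ replicate b True)"
  by (auto simp: sorted_append)

lemma replicate_False_True_inject:
  "replicate a False @ replicate b True = replicate a' False @ replicate b' True \<longleftrightarrow> a = a' \<and> b = b'"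
proof
  assume eq: "replicate a False @ replicate b True = replicate a' False @ replicate b' True"
  have "b = b'" using arg_cong[OF eq, of "\<lambda>w. length (filter id w)"] by simp
  moreover have "a = a'" using arg_cong[OF eq, of length] \<open>b = b'\<close> by simp
  ultimately show "a = a' \<and> b = b'" by simp
qed simp

lemma suffix_replicate_True_le:
  assumes "x @ False # replicate m True = u @ replicate q True"
  shows "q \<le> m"
proof (rule ccontr)
  assume "\<not> q \<le> m"
  then have "replicate q True = replicate (q - Suc m) True @ True # replicate m True"
    by (simp flip: replicate_add replicate_Suc add: replicate_append_same)
  then have "x @ [False] = (u @ replicate (q - Suc m) True) @ [True]"
    using assms by simp
  then show False by simp
qed

lemma sorted_prefix_before_boundary:
  fixes us y B v :: "bool list"
  assumes "us @ y = B @ v" "sorted B" "us \<noteq> []" "last us" "y = [] \<or> \<not> hd y"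
  shows "\<exists>zs. us = B @ zs \<and> v = zs @ y"
proof -
  obtain zs where "us = B @ zs \<and> zs @ y = v \<or> us @ zs = B \<and> y = zs @ v"
    using assms(1) append_eq_append_conv2[of us y B v] by blast
  then show ?thesis
  proof (elim disjE conjE)
    assume "us @ zs = B" "y = zs @ v"
    show ?thesis
    proof (cases "zs = []")
      case False
      with assms(5) \<open>y = zs @ v\<close> have "False \<in> set zs" by (cases zs) auto
      moreover have "True \<in> set us" using assms(3,4) last_in_set by fastforce
      ultimately show ?thesis
        using \<open>sorted B\<close> \<open>us @ zs = B\<close> by (auto simp: sorted_append)
    qed (use \<open>us @ zs = B\<close> \<open>y = zs @ v\<close> in simp)
  qed blast
qed

lemma last_block_decomposition:
  assumes "False \<in> set w"
  shows "\<exists>x a k. (x = [] \<or> last x) \<and> 0 < a \<and> w = x @ replicate a False @ replicate k True"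
  using assms
proof (induction w rule: rev_induct)
  case (snoc c w)
  consider "w = [] \<or> last w" "\<not> c" | "c" | "w \<noteq> []" "\<not> last w" "\<not> c"
    by blast
  then show ?case
  proof cases
    case 1
    then show ?thesis by (intro exI[of _ w] exI[of _ 1] exI[of _ 0]) auto
  next
    case 2
    then obtain x a k where "x = [] \<or> last x" "0 < a" "w = x @ replicate a False @ replicate k True"
      using snoc by auto
    then show ?thesis using 2
      by (intro exI[of _ x] exI[of _ a] exI[of _ "Suc k"]) (simp add: replicate_append_same)
  next
    case 3
    then obtain x a k where "x = [] \<or> last x" "0 < a" "w = x @ replicate a False @ replicate k True"
      using snoc last_in_set by metis
    moreover have "k = 0" using 3 calculation by (cases "k = 0") (auto simp: last_append)
    ultimately show ?thesis using 3
      by (intro exI[of _ x] exI[of _ "Suc a"] exI[of _ 0]) (simp add: replicate_append_same)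
  qed
qed simp

lemma last_block_cases:
  obtains (all_True) "w = replicate (length w) True"
  | (last_block) x a k where "x = [] \<or> last x" "0 < a" "w = x @ replicate a False @ replicate k True"
proof (cases "False \<in> set w")
  case False
  then have "w = replicate (length w) True"
    by (metis (full_types) replicate_length_same)
  then show ?thesis by (rule all_True)
qed (use last_block_decomposition last_block in blast)

lemma q_decreasingI:
  assumes "\<And>u a b v. w = u @ replicate a False @ replicate b True @ v \<Longrightarrow> 0 < a
    \<Longrightarrow> u = [] \<or> last u \<Longrightarrow> v = [] \<or> \<not> hd v \<Longrightarrow> b < q * a"
  shows "q_decreasing q w"
  using assms unfolding q_decreasing_def by auto

lemma q_decreasingD:
  assumes "q_decreasing q (u @ replicate a False @ replicate b True @ v)" "0 < a"
    "u = [] \<or> last u" "v = [] \<or> \<not> hd v"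
  shows "b < q * a"
  using assms unfolding q_decreasing_def by auto

lemma q_decreasing_replicate_True: "q_decreasing q (replicate m True)"
proof (rule q_decreasingI)
  fix u a b v
  assume "replicate m True = u @ replicate a False @ replicate b True @ v" "0 < a"
  then have "False \<in> set (replicate m True)" by simp
  then show "b < q * a" by simp
qed

lemma q_decreasing_appendI:
  assumes x: "x = [] \<or> last x" and y: "y = [] \<or> \<not> hd y"
    and dec: "q_decreasing q x" "q_decreasing q y"
  shows "q_decreasing q (x @ y)"
proof (rule q_decreasingI)
  fix u a b v
  let ?B = "replicate a False @ replicate b True"
  assume "x @ y = u @ replicate a False @ replicate b True @ v" "0 < a"
    and u: "u = [] \<or> last u" and v: "v = [] \<or> \<not> hd v"
  then obtain us where
    "x = u @ us \<and> us @ y = ?B @ v \<or> x @ us = u \<and> y = us @ ?B @ v"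
    using append_eq_append_conv2[of x y u "?B @ v"] by auto
  then show "b < q * a"
  proof (elim disjE conjE)
    assume "x @ us = u" "y = us @ ?B @ v"
    moreover have "us = [] \<or> last us"
      using u \<open>x @ us = u\<close> by (cases us rule: rev_cases) auto
    ultimately show ?thesis
      using dec(2) \<open>0 < a\<close> v q_decreasingD[of q us a b v] by simp
  next
    assume "x = u @ us" "us @ y = ?B @ v"
    show ?thesis
    proof (cases "us = []")
      case True
      then show ?thesis
        using dec(2) \<open>us @ y = ?B @ v\<close> \<open>0 < a\<close> v q_decreasingD[of q "[]" a b v] by simp
    next
      case False
      then have "last us" using x \<open>x = u @ us\<close> by auto
      moreover have "sorted ?B" by (rule sorted_False_True)
      ultimately obtain zs where "us = ?B @ zs" "v = zs @ y"
        using sorted_prefix_before_boundary \<open>us @ y = ?B @ v\<close> \<open>us \<noteq> []\<close> y by blast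
      moreover have "zs = [] \<or> \<not> hd zs"
        using v \<open>v = zs @ y\<close> by (cases zs) auto
      ultimately show ?thesis
        using dec(1) \<open>x = u @ us\<close> \<open>0 < a\<close> u q_decreasingD[of q u a b zs] by simp
    qed
  qed
qed

lemma q_decreasing_append:
  assumes x: "x = [] \<or> last x" and y: "y = [] \<or> \<not> hd y"
  shows "q_decreasing q (x @ y) \<longleftrightarrow> q_decreasing q x \<and> q_decreasing q y"
proof (intro iffI conjI)
  assume xy: "q_decreasing q (x @ y)"
  show "q_decreasing q x"
  proof (rule q_decreasingI)
    fix u a b v
    assume "x = u @ replicate a False @ replicate b True @ v" "0 < a" "u = [] \<or> last u"
      "v = [] \<or> \<not> hd v"
    moreover have "v @ y = [] \<or> \<not> hd (v @ y)"
      using \<open>v = [] \<or> \<not> hd v\<close> y by (cases v) auto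
    ultimately show "b < q * a"
      using xy q_decreasingD[of q u a b "v @ y"] by simp
  qed
  show "q_decreasing q y"
  proof (rule q_decreasingI)
    fix u a b v
    assume "y = u @ replicate a False @ replicate b True @ v" "0 < a" "u = [] \<or> last u"
      "v = [] \<or> \<not> hd v"
    moreover have "x @ u = [] \<or> last (x @ u)"
      using \<open>u = [] \<or> last u\<close> x by (cases u rule: rev_cases) auto
    ultimately show "b < q * a"
      using xy q_decreasingD[of q "x @ u" a b v] by simp
  qed
qed (use assms q_decreasing_appendI in blast)

lemma q_decreasing_block:
  assumes "0 < a"
  shows "q_decreasing q (replicate a False @ replicate b True) \<longleftrightarrow> b < q * a"
proof
  assume "q_decreasing q (replicate a False @ replicate b True)"
  then show "b < q * a" using assms q_decreasingD[of q "[]" a b "[]"] by simp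
next
  assume "b < q * a"
  show "q_decreasing q (replicate a False @ replicate b True)"
  proof (rule q_decreasingI)
    fix u a' b' v
    assume eq: "replicate a False @ replicate b True = u @ replicate a' False @ replicate b' True @ v"
      and "0 < a'" "u = [] \<or> last u" "v = [] \<or> \<not> hd v"
    show "b' < q * a'"
    proof (cases "b' = 0")
      case True
      have "0 < q" using \<open>b < q * a\<close> by (cases q) auto
      then show ?thesis using True \<open>0 < a'\<close> by simp
    next
      case False
      have sorted: "sorted (u @ replicate a' False @ replicate b' True @ v)"
        unfolding eq[symmetric] by (rule sorted_False_True)
      have "u = []"
      proof (rule ccontr)
        assume "u \<noteq> []"
        then have "True \<in> set u" using \<open>u = [] \<or> last u\<close> last_in_set by fastforce
        then show False using sorted \<open>0 < a'\<close> by (auto simp: sorted_append)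
      qed
      moreover have "v = []"
      proof (rule ccontr)
        assume "v \<noteq> []"
        then have "False \<in> set v" using \<open>v = [] \<or> \<not> hd v\<close> by (cases v) auto
        then show False using sorted \<open>b' \<noteq> 0\<close> by (auto simp: sorted_append)
      qed
      ultimately have "a = a' \<and> b = b'"
        using eq replicate_False_True_inject by simp
      then show ?thesis using \<open>b < q * a\<close> by simp
    qed
  qed
qed

lemma q_decreasing_append_block:
  assumes "x = [] \<or> last x" "0 < a"
  shows "q_decreasing q (x @ replicate a False @ replicate b True) \<longleftrightarrow> q_decreasing q x \<and> b < q * a"
  using q_decreasing_append[of x "replicate a False @ replicate b True" q]
    q_decreasing_block[of a q b] assms by simp

lemma psi_replicate_True: "psi q (replicate m True) = replicate (m + q + 1) True"
  by (simp add: psi_def)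

lemma psi_append_block:
  assumes "0 < a"
  shows "psi q (x @ replicate a False @ replicate k True) = x @ replicate (a + 1) False @ replicate (k + q) True"
proof -
  obtain a' where a': "a = Suc a'" using assms by (cases a) auto
  let ?w = "x @ replicate a False @ replicate k True"
  have "takeWhile (\<lambda>y. y) (replicate k True @ False # r) = replicate k True" for r
    by (induction k) auto
  moreover have "rev ?w = replicate k True @ False # replicate a' False @ rev x"
    using a' by (simp add: replicate_append_same[symmetric])
  ultimately have "length (takeWhile (\<lambda>y. y) (rev ?w)) = k"
    by (metis length_replicate)
  moreover have "take (length ?w - k - 1) ?w = x @ replicate a' False"
    using a' by (simp add: replicate_append_same[symmetric])
  ultimately show ?thesis
    using a' by (simp add: psi_def Let_def replicate_append_same[symmetric])
qed

lemma psi_image_q_decreasing: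
  assumes "q_decreasing q w"
  shows "q_decreasing q (psi q w) \<and> length (psi q w) = length w + q + 1
    \<and> (\<exists>u. psi q w = u @ replicate q True)"
proof (cases w rule: last_block_cases)
  case all_True
  then have psi: "psi q w = replicate (length w + q + 1) True"
    by (metis psi_replicate_True)
  have "q_decreasing q (psi q w)"
    unfolding psi by (rule q_decreasing_replicate_True)
  moreover have "psi q w = replicate (length w + 1) True @ replicate q True"
    unfolding psi by (simp add: replicate_add[symmetric])
  ultimately show ?thesis
    using psi by auto
next
  case (last_block x a k)
  then have psi: "psi q w = x @ replicate (a + 1) False @ replicate (k + q) True"
    by (simp add: psi_append_block)
  have "q_decreasing q x" "k < q * a"
    using assms last_block q_decreasing_append_block by auto
  then have "q_decreasing q (psi q w)"
    using last_block psi q_decreasing_append_block[of x "a + 1" q "k + q"] by simp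
  moreover have "psi q w = (x @ replicate (a + 1) False @ replicate k True) @ replicate q True"
    using psi by (simp add: replicate_add)
  moreover have "length (psi q w) = length w + q + 1"
    using psi last_block by simp
  ultimately show ?thesis by blast
qed

lemma psi_preimage_q_decreasing:
  assumes "q_decreasing q w'" "w' = u @ replicate q True" "q < length w'"
  obtains w where "q_decreasing q w" "length w' = length w + q + 1" "psi q w = w'"
proof (cases w' rule: last_block_cases)
  case all_True
  show ?thesis
  proof (rule that)
    have len: "length w' - q - 1 + q + 1 = length w'"
      using assms(3) by simp
    show "psi q (replicate (length w' - q - 1) True) = w'"
      unfolding psi_replicate_True len by (rule all_True[symmetric])
  qed (use assms(3) in \<open>auto simp: q_decreasing_replicate_True\<close>)
next
  case (last_block x a m)
  then have "q_decreasing q x" "m < q * a"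
    using assms(1) q_decreasing_append_block by auto
  have "q \<le> m"
    using assms(2) last_block suffix_replicate_True_le[of "x @ replicate (a - 1) False" m u q]
    by (cases a) (auto simp: replicate_append_same[symmetric])
  then have "2 \<le> a" using \<open>m < q * a\<close> \<open>0 < a\<close> by (cases "a = 1") auto
  define w where "w = x @ replicate (a - 1) False @ replicate (m - q) True"
  have "psi q w = w'"
    using psi_append_block[of "a - 1" q x "m - q"] \<open>2 \<le> a\<close> \<open>q \<le> m\<close> last_block
    by (simp add: w_def)
  moreover have "m - q < q * (a - 1)"
    using \<open>m < q * a\<close> \<open>q \<le> m\<close> by (simp add: diff_mult_distrib2)
  then have "q_decreasing q w"
    using q_decreasing_append_block[of x "a - 1" q "m - q"] last_block \<open>2 \<le> a\<close>
      \<open>q_decreasing q x\<close> by (simp add: w_def)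
  moreover have "length w' = length w + q + 1"
    using last_block \<open>2 \<le> a\<close> \<open>q \<le> m\<close> by (simp add: w_def)
  ultimately show ?thesis using that by blast
qed

theorem proposition2:
  fixes q n :: nat
  assumes "1 \<le> q"
  shows "psi q ` qdec_words q n =
         {w \<in> qdec_words q (n + q + 1). \<exists>u. w = u @ replicate q True}"
proof (intro equalityI subsetI)
  fix w'
  assume "w' \<in> psi q ` qdec_words q n"
  then show "w' \<in> {w \<in> qdec_words q (n + q + 1). \<exists>u. w = u @ replicate q True}"
    using psi_image_q_decreasing by (auto simp: qdec_words_def binwords_def)
next
  fix w'
  assume "w' \<in> {w \<in> qdec_words q (n + q + 1). \<exists>u. w = u @ replicate q True}"
  then obtain u where "q_decreasing q w'" "w' = u @ replicate q True" "length w' = n + q + 1"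
    by (auto simp: qdec_words_def binwords_def)
  moreover from this(3) have "q < length w'" by simp
  ultimately obtain w where "q_decreasing q w" "length w' = length w + q + 1" "psi q w = w'"
    using psi_preimage_q_decreasing by blast
  then show "w' \<in> psi q ` qdec_words q n"
    using \<open>length w' = n + q + 1\<close> by (auto simp: qdec_words_def binwords_def)
qed

end
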